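(* Let $N\ge1$, let $n\ge m$ be positive integers, and let $\Omega_j\in\mathbb R^{n\times n}$, $\Psi_j\in\mathbb R^{m\times m}$ ($1\le j\le N$) be skew-symmetric with $\mathcal D(\Omega)\ge\mathcal D(\Psi)$. Fix initial data $(U_j^0,V_j^0)\in\mathbf{SO}(n)\times\mathbf{SO}(m)$. For $\kappa>\kappa_c$ with $\mathcal L(0)<\nu_2(\kappa)$, let $\{(U_j,V_j)\}$ be the solution of $$\dot U_j=\Omega_jU_j+\frac{\kappa}{N}\sum_{k=1}^N\langle V_j,V_k\rangle_F(U_k-U_jU_k^\top U_j),\quad \dot V_j=\Psi_jV_j+\frac{\kappa}{N}\sum_{k=1}^N\langle U_j,U_k\rangle_F(V_k-V_jV_k^\top V_j)$$ with $(U_j,V_j)(0)=(U_j^0,V_j^0)$. Then $\lim_{\kappa\to\infty}\limsup_{t\to\infty}\mathcal L(t)=0$, the limit in $\kappa$ being over coupling strengths satisfying these conditions, all other data fixed.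
   Context: For real matrices $\langle A,B\rangle_F=\mathrm{tr}(A^\top B)$, $\|A\|_F=\sqrt{\langle A,A\rangle_F}$. $\mathcal D(\Omega)=\max_{i,j}\|\Omega_i-\Omega_j\|_\infty$, $\mathcal D(\Psi)=\max_{i,j}\|\Psi_i-\Psi_j\|_\infty$, with $\|\cdot\|_\infty$ the matrix norm so denoted in the paper (not further specified there). For a solution: $d_{ij}=\langle U_i,U_j\rangle_F$, $c_{ij}=\langle V_i,V_j\rangle_F$, $\mathcal D(\mathcal U)=\max\|U_i-U_j\|_F$, $\mathcal D(\mathcal V)=\max\|V_i-V_j\|_F$, $\mathcal S(\mathcal U)=\max|n-d_{ij}|$, $\mathcal S(\mathcal V)=\max|m-c_{ij}|$, $\mathcal L=\mathcal D(\mathcal U)+\mathcal D(\mathcal V)+\mathcal S(\mathcal U)+\mathcal S(\mathcal V)$. Let $g(s)=2ms-(4n+9)s^2-(2n+\tfrac83)s^3$, $s_*=\frac{-(4n+9)+\sqrt{(4n+9)^2+4m(3n+4)}}{6n+8}$, $\kappa_c=\frac{2(1+3\sqrt n)\mathcal D(\Omega)}{g(s_* )}$, and for $\kappa>\kappa_c$ let $\nu_2(\kappa)$ be the largest positive root of $g(s)=\frac{2(1+3\sqrt n)\mathcal D(\Omega)}{\kappa}$. *)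

theory Defs
  imports "HOL-Analysis.Analysis"
begin

definition frob_inner :: "real^'n^'m \<Rightarrow> real^'n^'m \<Rightarrow> real" where
  "frob_inner A B = trace (transpose A ** B)"

definition frob_norm :: "real^'n^'m \<Rightarrow> real" where
  "frob_norm A = sqrt (frob_inner A A)"

definition mat_inf_norm :: "real^'n::finite^'m::finite \<Rightarrow> real" where
  "mat_inf_norm A = Max (range (\<lambda>i. \<Sum>j\<in>UNIV. \<bar>A$i$j\<bar>))"

definition diam_inf :: "('k::finite \<Rightarrow> real^'n::finite^'n) \<Rightarrow> real" where
  "diam_inf W = Max (range (\<lambda>(i,j). mat_inf_norm (W i - W j)))"

definition diam_F :: "('k::finite \<Rightarrow> real^'n::finite^'n) \<Rightarrow> real" where
  "diam_F X = Max (range (\<lambda>(i,j). frob_norm (X i - X j)))"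

definition sep_F :: "('k::finite \<Rightarrow> real^'n::finite^'n) \<Rightarrow> real" where
  "sep_F X = Max (range (\<lambda>(i,j). \<bar>real CARD('n) - frob_inner (X i) (X j)\<bar>))"

definition lyapL :: "('k::finite \<Rightarrow> real^'n::finite^'n) \<Rightarrow> ('k \<Rightarrow> real^'m::finite^'m) \<Rightarrow> real" where
  "lyapL X Y = diam_F X + diam_F Y + sep_F X + sep_F Y"

definition gfun :: "real \<Rightarrow> real \<Rightarrow> real \<Rightarrow> real" where
  "gfun n m x = 2*m*x - (4*n+9)*(x ^ 2) - (2*n + 8/3)*(x ^ 3)"

definition s_star :: "real \<Rightarrow> real \<Rightarrow> real" where
  "s_star n m = (-(4*n+9) + sqrt ((4*n+9)^2 + 4 * m *(3*n+4))) / (6*n+8)"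

definition kappa_c :: "real \<Rightarrow> real \<Rightarrow> real \<Rightarrow> real" where
  "kappa_c n m DO = 2*(1 + 3 * sqrt n)*DO / gfun n m (s_star n m)"

definition nu2 :: "real \<Rightarrow> real \<Rightarrow> real \<Rightarrow> real \<Rightarrow> real" where
  "nu2 n m DO \<kappa> = (GREATEST s. s > 0 \<and> gfun n m s = 2*(1 + 3 * sqrt n)*DO / \<kappa>)"

end

theory Submission
  imports Defs
begin

(* Along the flow every U_j and V_j stays orthogonal, since the defect Y = U^T U - I satisfies
   d/dt |Y|^2 <= K |Y|^2 and Y(0) = 0.  For orthogonal A, B the identity
   B - A B^T A = 2 (B - A) + A (B - A)^T (B - A) shows that, while all pairwise squared distances
   are at most w <= 1/4 (so that all weights <V_j, V_k> are at least 7/8), the coupling decreases a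
   maximal squared distance w at rate at least 7 kappa w / 16, against a frequency drift of at most
   2 sqrt w C, where C bounds all |Omega_i - Omega_j| and |Psi_i - Psi_j|.  Hence the squared
   distances stay below the barrier b + (1/4 - b) exp (-7 kappa t / 32) once
   b >= (64 C / (7 kappa))^2; the barrier starts above them because L(0) < nu_2(kappa) < 1/2.
   So limsup L <= 2 sqrt (2 b) + 2 b, where b can be taken O(1 / kappa). *)

lemma frob_inner_eq_inner: "frob_inner (A::real^'n::finite^'m::finite) B = inner A B"
  unfolding frob_inner_def trace_def matrix_matrix_mult_def transpose_def inner_vec_def
  by (simp add: sum.swap[of _ "UNIV::'n set"])

lemma frob_norm_eq_norm: "frob_norm (A::real^'n::finite^'m::finite) = norm A"
  by (simp add: frob_norm_def frob_inner_eq_inner norm_eq_sqrt_inner)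

lemma inner_matrix_mult_left:
  "inner ((A::real^'n::finite^'m::finite) ** (B::real^'p::finite^'n)) C = inner B (transpose A ** C)"
proof -
  have "inner (A ** B) C = (\<Sum>i\<in>UNIV. \<Sum>j\<in>UNIV. \<Sum>k\<in>UNIV. A$i$k * B$k$j * C$i$j)"
    by (simp add: inner_vec_def matrix_matrix_mult_def sum_distrib_right)
  also have "\<dots> = (\<Sum>i\<in>UNIV. \<Sum>k\<in>UNIV. \<Sum>j\<in>UNIV. A$i$k * B$k$j * C$i$j)"
    by (rule sum.cong[OF refl], rule sum.swap)
  also have "\<dots> = (\<Sum>k\<in>UNIV. \<Sum>i\<in>UNIV. \<Sum>j\<in>UNIV. A$i$k * B$k$j * C$i$j)"
    by (rule sum.swap)
  also have "\<dots> = (\<Sum>k\<in>UNIV. \<Sum>j\<in>UNIV. \<Sum>i\<in>UNIV. A$i$k * B$k$j * C$i$j)"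
    by (rule sum.cong[OF refl], rule sum.swap)
  also have "\<dots> = inner B (transpose A ** C)"
    by (simp add: inner_vec_def matrix_matrix_mult_def transpose_def sum_distrib_left mult_ac)
  finally show ?thesis .
qed

lemma inner_transpose: "inner (transpose (A::real^'n::finite^'m::finite)) (transpose B) = inner A B"
  unfolding inner_vec_def transpose_def by (simp add: sum.swap[of _ "UNIV::'n set"])

lemma inner_matrix_mult_right:
  "inner ((A::real^'n::finite^'m::finite) ** (B::real^'p::finite^'n)) C = inner A (C ** transpose B)"
proof -
  have "inner (A ** B) C = inner (transpose B ** transpose A) (transpose C)"
    by (metis inner_transpose matrix_transpose_mul)
  also have "\<dots> = inner (transpose A) (transpose (C ** transpose B))"
    by (simp add: inner_matrix_mult_left matrix_transpose_mul)
  also have "\<dots> = inner A (C ** transpose B)"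
    by (rule inner_transpose)
  finally show ?thesis .
qed

lemma norm_transpose: "norm (transpose (A::real^'n::finite^'m::finite)) = norm A"
  by (simp add: norm_eq_sqrt_inner inner_transpose)

lemma norm_matrix_mult_le:
  "norm ((A::real^'n::finite^'m::finite) ** (B::real^'p::finite^'n)) \<le> norm A * norm B"
proof -
  have entry: "((A ** B)$i$j)^2 \<le> norm (A$i)^2 * norm (column j B)^2" for i j
  proof -
    have "(A ** B)$i$j = inner (A$i) (column j B)"
      by (simp add: matrix_matrix_mult_def inner_vec_def column_def)
    then show ?thesis
      by (simp add: Cauchy_Schwarz_ineq power2_norm_eq_inner)
  qed
  have "norm (A ** B)^2 = (\<Sum>i\<in>UNIV. \<Sum>j\<in>UNIV. ((A ** B)$i$j)^2)"
    unfolding power2_norm_eq_inner by (simp add: inner_vec_def power2_eq_square)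
  also have "\<dots> \<le> (\<Sum>i\<in>UNIV. \<Sum>j\<in>UNIV. norm (A$i)^2 * norm (column j B)^2)"
    by (intro sum_mono entry)
  also have "\<dots> = (\<Sum>i\<in>UNIV. norm (A$i)^2) * (\<Sum>j\<in>UNIV. norm (column j B)^2)"
    by (simp add: sum_product)
  also have "(\<Sum>i\<in>UNIV. norm (A$i)^2) = norm A^2"
    by (simp add: power2_norm_eq_inner inner_vec_def[of A])
  also have "(\<Sum>j\<in>UNIV. norm (column j B)^2) = norm B^2"
    by (simp add: power2_norm_eq_inner inner_vec_def column_def sum.swap[of _ "UNIV::'p set"])
  finally have "norm (A ** B)^2 \<le> (norm A * norm B)^2"
    by (simp add: power_mult_distrib)
  then show ?thesis
    by (rule power2_le_imp_le) simp
qed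

lemma bounded_bilinear_matrix_mult:
  "bounded_bilinear ((**) :: real^'n::finite^'m::finite \<Rightarrow> real^'p::finite^'n \<Rightarrow> real^'p^'m)"
proof
  show "\<exists>K. \<forall>(A::real^'n^'m) (B::real^'p^'n). norm (A ** B) \<le> norm A * norm B * K"
    by (rule exI[of _ 1]) (simp add: norm_matrix_mult_le)
  show "(A + A') ** B = A ** B + A' ** B" for A A' :: "real^'n^'m" and B :: "real^'p^'n"
    by (simp add: matrix_matrix_mult_def vec_eq_iff sum.distrib distrib_right)
qed (simp_all add: matrix_add_ldistrib scalar_matrix_assoc matrix_scalar_ac)

interpretation matrix_mult:
  bounded_bilinear "(**) :: real^'n::finite^'m::finite \<Rightarrow> real^'p::finite^'n \<Rightarrow> real^'p^'m"
  by (rule bounded_bilinear_matrix_mult)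

lemma bounded_linear_transpose: "bounded_linear (transpose :: real^'n::finite^'m::finite \<Rightarrow> real^'m^'n)"
proof (rule bounded_linear_intro[where K=1])
  show "transpose (A + B) = transpose A + transpose B" for A B :: "real^'n^'m"
    by (simp add: transpose_def vec_eq_iff)
qed (simp_all add: transpose_scalar norm_transpose)

lemma transpose_diff: "transpose ((A::real^'n::finite^'m::finite) - B) = transpose A - transpose B"
  by (simp add: transpose_def vec_eq_iff)

lemma inner_symmetric_transpose:
  assumes "transpose Y = Y"
  shows "inner (Y::real^'n::finite^'n) (transpose B) = inner Y B"
  using inner_transpose[of Y "transpose B"] assms by simp

lemma inner_symmetric_skew_matrix:
  assumes "transpose Y = Y" "transpose S = - S"
  shows "inner (Y::real^'n::finite^'n) S = 0"
  using inner_symmetric_transpose[OF assms(1), of S] assms(2) by simp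

lemma inner_skew_matrix_mult_self:
  assumes "transpose W = - W"
  shows "inner (X::real^'p::finite^'n::finite) (W ** X) = 0"
proof -
  have "inner (W ** X) X = - inner X (W ** X)"
    using assms by (simp add: inner_matrix_mult_left matrix_mult.minus_left)
  then show ?thesis
    by (simp add: inner_commute)
qed

lemma norm_orthogonal_matrix_mult:
  assumes "orthogonal_matrix Q"
  shows "norm ((Q::real^'n::finite^'n) ** (X::real^'p::finite^'n)) = norm X"
proof -
  have "inner (Q ** X) (Q ** X) = inner X X"
    using assms by (simp add: inner_matrix_mult_left matrix_mul_assoc orthogonal_matrix_def)
  then show ?thesis
    by (simp add: norm_eq_sqrt_inner)
qed

lemma norm_mult_orthogonal_matrix:
  assumes "orthogonal_matrix Q"
  shows "norm ((X::real^'n::finite^'p::finite) ** (Q::real^'n^'n)) = norm X"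
proof -
  have "inner (X ** Q) (X ** Q) = inner X X"
    using assms by (simp add: inner_matrix_mult_right matrix_mul_assoc[symmetric] orthogonal_matrix_def)
  then show ?thesis
    by (simp add: norm_eq_sqrt_inner)
qed

lemma inner_self_orthogonal_matrix:
  assumes "orthogonal_matrix Q"
  shows "inner (Q::real^'n::finite^'n) Q = real CARD('n)"
proof -
  have "inner Q Q = inner (mat 1) (transpose Q ** Q)"
    by (metis inner_matrix_mult_left matrix_mul_rid)
  also have "\<dots> = real CARD('n)"
    using assms by (simp add: orthogonal_matrix inner_vec_def mat_def if_distrib cong: if_cong)
  finally show ?thesis .
qed

lemma norm_diff_orthogonal_matrix_sq:
  assumes "orthogonal_matrix Q" "orthogonal_matrix R"
  shows "norm ((Q::real^'n::finite^'n) - R)^2 = 2 * (real CARD('n) - inner Q R)"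
proof -
  have "norm (Q - R)^2 = inner Q Q + inner R R - 2 * inner Q R"
    by (simp add: power2_norm_eq_inner inner_diff_left inner_diff_right inner_commute[of R Q])
  then show ?thesis
    using inner_self_orthogonal_matrix[OF assms(1)] inner_self_orthogonal_matrix[OF assms(2)] by simp
qed

lemma inner_orthogonal_matrix_ge:
  assumes "orthogonal_matrix Q" "orthogonal_matrix R" "norm ((Q::real^'n::finite^'n) - R)^2 \<le> 1/4"
  shows "7/8 \<le> inner Q R"
proof -
  have "1 \<le> real CARD('n)"
    by simp
  then show ?thesis
    using assms(3) norm_diff_orthogonal_matrix_sq[OF assms(1,2)] by argo
qed

lemma norm_diff_sq_le: "norm (p - q)^2 \<le> 2 * norm (p::'a::real_inner)^2 + 2 * norm q^2"
proof -
  have "norm (p - q)^2 + norm (p + q)^2 = 2 * norm p^2 + 2 * norm q^2"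
    by (simp add: power2_norm_eq_inner inner_diff_left inner_diff_right inner_add_left inner_add_right
        inner_commute)
  then show ?thesis
    using zero_le_power2[of "norm (p + q)"] by argo
qed

lemma has_real_derivative_norm_sq:
  assumes "(X has_vector_derivative X') (at t within S)"
  shows "((\<lambda>t. norm (X t)^2) has_real_derivative 2 * inner (X t) X') (at t within S)"
proof -
  have "((\<lambda>t. inner (X t) (X t)) has_vector_derivative inner (X t) X' + inner X' (X t)) (at t within S)"
    using bounded_bilinear.has_vector_derivative[OF bounded_bilinear_inner assms assms] by simp
  then show ?thesis
    by (simp add: power2_norm_eq_inner inner_commute has_real_derivative_iff_has_vector_derivative)
qed

(* For the equation of U_j: W = Omega_j, c k = <V_j, V_k>, X k = U_k and A = U_j. *)
definition lohe_field ::
    "real \<Rightarrow> real^'n::finite^'n \<Rightarrow> ('k::finite \<Rightarrow> real) \<Rightarrow> ('k \<Rightarrow> real^'n^'n) \<Rightarrow> real^'n^'n \<Rightarrow> real^'n^'n"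
  where "lohe_field \<kappa> W c X A =
    W ** A + (\<kappa> / real CARD('k)) *\<^sub>R (\<Sum>k\<in>UNIV. c k *\<^sub>R (X k - A ** transpose (X k) ** A))"

lemma lohe_term_eq:
  fixes a k :: "real^'n::finite^'n"
  assumes "orthogonal_matrix a" "orthogonal_matrix k"
  shows "k - a ** transpose k ** a = 2 *\<^sub>R (k - a) + a ** (transpose (k - a) ** (k - a))"
proof -
  have "a ** (transpose (k - a) ** (k - a))
      = a ** (transpose k ** k) - a ** (transpose k ** a) - a ** (transpose a ** k) + a ** (transpose a ** a)"
    by (simp add: transpose_diff matrix_mult.diff_left matrix_mult.diff_right matrix_mult.add_right
        algebra_simps)
  also have "\<dots> = 2 *\<^sub>R a - a ** transpose k ** a - k"
    using assms by (simp add: matrix_mul_assoc orthogonal_matrix_def scaleR_2)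
  finally show ?thesis
    by (simp add: scaleR_2 algebra_simps)
qed

text \<open>With \<open>E = k - a\<close> and \<open>F = b - a\<close> the left-hand side is
  \<open>-2\<langle>F,E\<rangle> - \<langle>F, a E\<^sup>T E\<rangle>\<close>; the hypothesis \<open>|b - k| \<le> |a - b|\<close> makes
  \<open>\<langle>F,E\<rangle> \<ge> |E|\<^sup>2/2\<close>, while \<open>|F| \<le> 1/2\<close> bounds the cubic term by \<open>|E|\<^sup>2/2\<close>.\<close>

lemma inner_lohe_term_le:
  fixes a b k :: "real^'n::finite^'n"
  assumes a: "orthogonal_matrix a" and k: "orthogonal_matrix k"
    and ab: "norm (a - b)^2 = v" and bk: "norm (b - k)^2 \<le> v" and v: "v \<le> 1/4"
  shows "inner (a - b) (k - a ** transpose k ** a) \<le> - (norm (k - a)^2) / 2"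
proof -
  define E where "E = k - a"
  define F where "F = b - a"
  have "norm (F - E)^2 = norm F^2 - 2 * inner F E + norm E^2"
    by (simp add: power2_norm_eq_inner inner_diff_left inner_diff_right inner_commute)
  moreover have "norm (F - E) = norm (b - k)" "norm F = norm (a - b)"
    by (simp_all add: E_def F_def norm_minus_commute)
  ultimately have FE: "norm E^2 / 2 \<le> inner F E"
    using ab bk by simp
  have "norm F^2 \<le> (1/2)^2"
    using ab v \<open>norm F = norm (a - b)\<close> by (simp add: power2_eq_square)
  then have "norm F \<le> 1/2"
    by (rule power2_le_imp_le) simp
  have "\<bar>inner F (a ** (transpose E ** E))\<bar> \<le> norm F * norm (transpose E ** E)"
    using Cauchy_Schwarz_ineq2[of F "a ** (transpose E ** E)"] by (simp add: norm_orthogonal_matrix_mult[OF a])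
  also have "\<dots> \<le> norm F * norm E^2"
    using norm_matrix_mult_le[of "transpose E" E]
    by (intro mult_left_mono) (simp_all add: norm_transpose power2_eq_square)
  also have "\<dots> \<le> 1/2 * norm E^2"
    using \<open>norm F \<le> 1/2\<close> by (intro mult_right_mono) simp_all
  finally have cubic: "\<bar>inner F (a ** (transpose E ** E))\<bar> \<le> norm E^2 / 2"
    by simp
  have "a - b = - F"
    by (simp add: F_def)
  then have "inner (a - b) (k - a ** transpose k ** a) = - 2 * inner F E - inner F (a ** (transpose E ** E))"
    unfolding lohe_term_eq[OF a k] E_def[symmetric] by (simp add: inner_add_right)
  then show ?thesis
    using FE cubic unfolding E_def by argo
qed

lemma inner_diff_lohe_coupling_le:
  fixes u :: "'k::finite \<Rightarrow> real^'n::finite^'n" and c :: "'k \<Rightarrow> 'k \<Rightarrow> real"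
  assumes orth: "\<And>k. orthogonal_matrix (u k)" and c: "\<And>a b. 7/8 \<le> c a b"
    and dist: "\<And>a b. norm (u a - u b)^2 \<le> v" and v: "v \<le> 1/4" and ij: "norm (u i - u j)^2 = v"
  shows "inner (u i - u j)
      ((\<Sum>k\<in>UNIV. c i k *\<^sub>R (u k - u i ** transpose (u k) ** u i))
       - (\<Sum>k\<in>UNIV. c j k *\<^sub>R (u k - u j ** transpose (u k) ** u j)))
    \<le> - 7/32 * real CARD('k) * v"
proof -
  define A where "A k = inner (u i - u j) (u k - u i ** transpose (u k) ** u i)" for k
  define B where "B k = inner (u i - u j) (u k - u j ** transpose (u k) ** u j)" for k
  have summand: "c i k * A k - c j k * B k \<le> - 7/32 * v" for k
  proof -
    have A: "A k \<le> - (norm (u k - u i)^2) / 2"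
      unfolding A_def using orth dist v ij by (intro inner_lohe_term_le) auto
    have "- B k \<le> - (norm (u k - u j)^2) / 2"
      unfolding B_def inner_minus_left[symmetric] minus_diff_eq
      using orth dist v ij by (intro inner_lohe_term_le) (auto simp: norm_minus_commute)
    then have B: "norm (u k - u j)^2 / 2 \<le> B k"
      by simp
    have "A k \<le> 0" "0 \<le> B k"
      using order_trans[OF A] order_trans[OF _ B] by simp_all
    have "c i k * A k \<le> 7/8 * A k"
      using \<open>A k \<le> 0\<close> by (rule mult_right_mono_neg[OF c])
    moreover have "7/8 * B k \<le> c j k * B k"
      using \<open>0 \<le> B k\<close> by (rule mult_right_mono[OF c])
    moreover have "v \<le> 2 * norm (u k - u j)^2 + 2 * norm (u k - u i)^2"
      using norm_diff_sq_le[of "u k - u j" "u k - u i"] ij by simp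
    ultimately show ?thesis
      using A B by argo
  qed
  have "inner (u i - u j)
      ((\<Sum>k\<in>UNIV. c i k *\<^sub>R (u k - u i ** transpose (u k) ** u i))
       - (\<Sum>k\<in>UNIV. c j k *\<^sub>R (u k - u j ** transpose (u k) ** u j)))
    = (\<Sum>k\<in>UNIV. c i k * A k - c j k * B k)"
    by (simp add: A_def B_def inner_diff_right inner_sum_right sum_subtractf)
  also have "\<dots> \<le> (\<Sum>(k::'k)\<in>UNIV. - 7/32 * v)"
    by (rule sum_mono) (rule summand)
  finally show ?thesis
    by simp
qed

lemma inner_diff_skew_mult_le:
  fixes a b W W' :: "real^'n::finite^'n"
  assumes "transpose W = - W" "orthogonal_matrix b"
  shows "inner (a - b) (W ** a - W' ** b) \<le> norm (a - b) * norm (W - W')"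
proof -
  have "W ** a - W' ** b = W ** (a - b) + (W - W') ** b"
    by (simp add: matrix_mult.diff_left matrix_mult.diff_right)
  then have "inner (a - b) (W ** a - W' ** b) = inner (a - b) ((W - W') ** b)"
    by (simp add: inner_add_right inner_skew_matrix_mult_self[OF assms(1)])
  also have "\<dots> \<le> norm (a - b) * norm (W - W')"
    using norm_cauchy_schwarz[of "a - b" "(W - W') ** b"] by (simp add: norm_mult_orthogonal_matrix[OF assms(2)])
  finally show ?thesis .
qed

lemma inner_diff_lohe_field_le:
  fixes u W :: "'k::finite \<Rightarrow> real^'n::finite^'n" and z :: "'k \<Rightarrow> real^'m::finite^'m"
  assumes orth_u: "\<And>k. orthogonal_matrix (u k)" and orth_z: "\<And>k. orthogonal_matrix (z k)"
    and skew: "\<And>k. transpose (W k) = - W k" and C: "\<And>a b. norm (W a - W b) \<le> C" and \<kappa>: "0 \<le> \<kappa>"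
    and dist_u: "\<And>a b. norm (u a - u b)^2 \<le> v" and dist_z: "\<And>a b. norm (z a - z b)^2 \<le> v"
    and v: "v \<le> 1/4" and ij: "norm (u i - u j)^2 = v"
  shows "2 * inner (u i - u j) (lohe_field \<kappa> (W i) (\<lambda>k. inner (z i) (z k)) u (u i)
                                 - lohe_field \<kappa> (W j) (\<lambda>k. inner (z j) (z k)) u (u j))
    \<le> 2 * sqrt v * C - 7/16 * \<kappa> * v"
proof -
  define N where "N = real CARD('k)"
  define S where "S a = (\<Sum>k\<in>UNIV. inner (z a) (z k) *\<^sub>R (u k - u a ** transpose (u k) ** u a))" for a
  have weight: "7/8 \<le> inner (z a) (z b)" for a b
    using dist_z[of a b] v by (intro inner_orthogonal_matrix_ge[OF orth_z orth_z]) simp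
  have "inner (u i - u j) (S i - S j) \<le> - 7/32 * N * v"
    unfolding S_def N_def using orth_u weight dist_u v ij by (rule inner_diff_lohe_coupling_le)
  then have "(\<kappa> / N) * inner (u i - u j) (S i - S j) \<le> (\<kappa> / N) * (- 7/32 * N * v)"
    using \<kappa> by (intro mult_left_mono) (simp_all add: N_def)
  moreover have "inner (u i - u j) (W i ** u i - W j ** u j) \<le> sqrt v * C"
  proof -
    have "inner (u i - u j) (W i ** u i - W j ** u j) \<le> norm (u i - u j) * norm (W i - W j)"
      using skew orth_u by (rule inner_diff_skew_mult_le)
    also have "\<dots> = sqrt v * norm (W i - W j)"
      using ij by (simp add: real_sqrt_unique[symmetric])
    also have "\<dots> \<le> sqrt v * C"
      by (rule mult_left_mono[OF C]) (simp add: ij[symmetric])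
    finally show ?thesis .
  qed
  moreover have "(\<kappa> / N) * (- 7/32 * N * v) = - 7/32 * \<kappa> * v"
    by (simp add: N_def)
  moreover have "lohe_field \<kappa> (W a) (\<lambda>k. inner (z a) (z k)) u (u a) = W a ** u a + (\<kappa> / N) *\<^sub>R S a" for a
    by (simp add: lohe_field_def S_def N_def)
  then have "inner (u i - u j) (lohe_field \<kappa> (W i) (\<lambda>k. inner (z i) (z k)) u (u i)
                               - lohe_field \<kappa> (W j) (\<lambda>k. inner (z j) (z k)) u (u j))
      = inner (u i - u j) (W i ** u i - W j ** u j) + (\<kappa> / N) * inner (u i - u j) (S i - S j)"
    by (simp add: inner_add_right inner_diff_right inner_scaleR_right right_diff_distrib)
  ultimately show ?thesis
    by linarith
qed

lemma inner_orthogonality_defect_lohe_field: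
  fixes u W :: "real^'n::finite^'n" and z :: "'k::finite \<Rightarrow> real^'n^'n"
  assumes skew: "transpose W = - W"
  defines "Y \<equiv> transpose u ** u - mat 1"
  shows "inner Y (transpose u ** lohe_field \<kappa> W c z u)
    = - (\<kappa> / real CARD('k)) * (\<Sum>k\<in>UNIV. c k * inner Y (Y ** transpose (transpose u ** z k)))"
proof -
  have Y_sym: "transpose Y = Y"
    by (simp add: Y_def transpose_diff matrix_transpose_mul)
  have "inner Y (transpose u ** (W ** u)) = 0"
    using skew by (intro inner_symmetric_skew_matrix[OF Y_sym])
      (simp add: matrix_transpose_mul matrix_mul_assoc matrix_mult.minus_left matrix_mult.minus_right)
  moreover have "inner Y (transpose u ** (z k - u ** transpose (z k) ** u))
      = - inner Y (Y ** transpose (transpose u ** z k))" for k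
  proof -
    have "transpose u ** (u ** transpose (z k) ** u)
        = Y ** transpose (transpose u ** z k) + transpose (transpose u ** z k)"
      by (simp add: Y_def matrix_mul_assoc matrix_transpose_mul matrix_mult.diff_left)
    then show ?thesis
      by (simp add: matrix_mult.diff_right inner_diff_right inner_add_right inner_symmetric_transpose[OF Y_sym])
  qed
  ultimately show ?thesis
    by (simp add: lohe_field_def matrix_add_ldistrib matrix_mult.scaleR_right matrix_mult.sum_right
        inner_add_right inner_sum_right sum_distrib_left sum_negf)
qed

lemma inner_orthogonality_defect_lohe_field_le:
  fixes u W :: "real^'n::finite^'n" and z :: "'k::finite \<Rightarrow> real^'n^'n"
  assumes skew: "transpose W = - W"
  defines "Y \<equiv> transpose u ** u - mat 1"
  shows "inner Y (transpose u ** lohe_field \<kappa> W c z u)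
    \<le> (\<bar>\<kappa>\<bar> / real CARD('k) * (\<Sum>k\<in>UNIV. \<bar>c k\<bar> * norm (transpose u ** z k))) * inner Y Y"
proof -
  define S where "S = (\<Sum>k\<in>UNIV. c k * inner Y (Y ** transpose (transpose u ** z k)))"
  define B where "B = (\<Sum>k\<in>UNIV. \<bar>c k\<bar> * norm (transpose u ** z k))"
  have summand: "\<bar>c k * inner Y (Y ** transpose (transpose u ** z k))\<bar>
      \<le> \<bar>c k\<bar> * norm (transpose u ** z k) * inner Y Y" for k
  proof -
    have "\<bar>inner Y (Y ** transpose (transpose u ** z k))\<bar> \<le> norm Y * norm (Y ** transpose (transpose u ** z k))"
      by (rule Cauchy_Schwarz_ineq2)
    also have "\<dots> \<le> norm Y * (norm Y * norm (transpose u ** z k))"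
      using norm_matrix_mult_le[of Y "transpose (transpose u ** z k)"]
      by (intro mult_left_mono) (simp_all add: norm_transpose)
    also have "\<dots> = norm (transpose u ** z k) * inner Y Y"
      by (simp add: power2_norm_eq_inner[symmetric] power2_eq_square mult_ac)
    finally show ?thesis
      by (simp add: abs_mult mult_left_mono mult.assoc)
  qed
  have "\<bar>S\<bar> \<le> B * inner Y Y"
    unfolding S_def B_def sum_distrib_right by (rule order_trans[OF sum_abs sum_mono[OF summand]])
  have "inner Y (transpose u ** lohe_field \<kappa> W c z u) = - (\<kappa> / real CARD('k)) * S"
    unfolding S_def Y_def by (rule inner_orthogonality_defect_lohe_field[OF skew])
  also have "\<dots> \<le> \<bar>\<kappa>\<bar> / real CARD('k) * \<bar>S\<bar>"
    using abs_ge_self[of "- (\<kappa> / real CARD('k)) * S"] by (simp add: abs_mult)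
  also have "\<dots> \<le> \<bar>\<kappa>\<bar> / real CARD('k) * (B * inner Y Y)"
    using \<open>\<bar>S\<bar> \<le> B * inner Y Y\<close> by (rule mult_left_mono) simp
  finally show ?thesis
    by (simp add: B_def)
qed

lemma DERIV_le_mult_imp_nonpos:
  fixes h h' :: "real \<Rightarrow> real"
  assumes dh: "\<And>s. 0 \<le> s \<Longrightarrow> s \<le> T \<Longrightarrow> (h has_real_derivative h' s) (at s within {0..})"
    and le: "\<And>s. 0 \<le> s \<Longrightarrow> s \<le> T \<Longrightarrow> h' s \<le> K * h s"
    and h0: "h 0 = 0" and T: "0 \<le> T"
  shows "h T \<le> 0"
proof -
  define g where "g s = h s * exp (- K * s)" for s
  have dg: "(g has_real_derivative (h' s - K * h s) * exp (- K * s)) (at s within {0..})"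
    if "0 \<le> s" "s \<le> T" for s
    unfolding g_def by (auto intro!: derivative_eq_intros dh[OF that] simp: algebra_simps)
  have "g T \<le> g 0"
  proof (rule DERIV_nonpos_imp_decreasing_open[OF T])
    show "\<exists>y. DERIV g s :> y \<and> y \<le> 0" if "0 < s" "s < T" for s
    proof (intro exI conjI)
      have "at s within {0..} = at s"
        using that by (intro at_within_interior) simp
      then show "DERIV g s :> (h' s - K * h s) * exp (- K * s)"
        using dg[of s] that by simp
      show "(h' s - K * h s) * exp (- K * s) \<le> 0"
        using le[of s] that by (simp add: mult_nonpos_nonneg)
    qed
    show "continuous_on {0..T} g"
      by (rule DERIV_continuous_on, rule DERIV_subset[OF dg]) auto
  qed
  then show ?thesis
    by (simp add: g_def h0 mult_le_0_iff)
qed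

lemma has_real_derivative_norm_orthogonality_defect:
  fixes u :: "real \<Rightarrow> real^'n::finite^'n"
  assumes "(u has_vector_derivative u') (at s within S)"
  shows "((\<lambda>s. norm (transpose (u s) ** u s - mat 1)^2) has_real_derivative
      4 * inner (transpose (u s) ** u s - mat 1) (transpose (u s) ** u')) (at s within S)"
proof -
  define Y where "Y = transpose (u s) ** u s - mat 1"
  have Y_sym: "transpose Y = Y"
    by (simp add: Y_def transpose_diff matrix_transpose_mul)
  have "((\<lambda>s. transpose (u s)) has_vector_derivative transpose u') (at s within S)"
    by (rule bounded_linear.has_vector_derivative[OF bounded_linear_transpose assms])
  from matrix_mult.has_vector_derivative[OF this assms]
  have "((\<lambda>s. transpose (u s) ** u s - mat 1) has_vector_derivative
      transpose (u s) ** u' + transpose u' ** u s - 0) (at s within S)"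
    by (intro has_vector_derivative_diff has_vector_derivative_const)
  moreover have "transpose u' ** u s = transpose (transpose (u s) ** u')"
    by (simp add: matrix_transpose_mul)
  ultimately have "((\<lambda>s. transpose (u s) ** u s - mat 1) has_vector_derivative
      transpose (u s) ** u' + transpose (transpose (u s) ** u')) (at s within S)"
    by simp
  from has_real_derivative_norm_sq[OF this]
  show ?thesis
    by (simp add: Y_def[symmetric] inner_add_right inner_symmetric_transpose[OF Y_sym])
qed

lemma orthogonal_matrix_lohe_flow:
  fixes u :: "real \<Rightarrow> real^'n::finite^'n" and z :: "real \<Rightarrow> 'k::finite \<Rightarrow> real^'n^'n"
    and c :: "real \<Rightarrow> 'k \<Rightarrow> real"
  assumes ode: "\<And>s. 0 \<le> s \<Longrightarrow> (u has_vector_derivative lohe_field \<kappa> W (c s) (z s) (u s)) (at s within {0..})"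
    and cont_z: "\<And>k. continuous_on {0..} (\<lambda>s. z s k)"
    and cont_c: "\<And>k. continuous_on {0..} (\<lambda>s. c s k)"
    and skew: "transpose W = - W" and init: "orthogonal_matrix (u 0)" and t: "0 \<le> t"
  shows "orthogonal_matrix (u t)"
proof -
  define Y where "Y s = transpose (u s) ** u s - mat 1" for s
  define K where "K s = \<bar>\<kappa>\<bar> / real CARD('k) * (\<Sum>k\<in>UNIV. \<bar>c s k\<bar> * norm (transpose (u s) ** z s k))" for s
  have cont_u: "continuous_on {0..} u"
    using ode by (intro continuous_on_vector_derivative) auto
  have "continuous_on {0..t} K"
    unfolding K_def using t
    by (intro continuous_intros continuous_on_subset[OF cont_c] continuous_on_subset[OF cont_z]
        matrix_mult.continuous_on bounded_linear.continuous_on[OF bounded_linear_transpose]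
        continuous_on_subset[OF cont_u]) auto
  then obtain KB where KB: "\<And>s. 0 \<le> s \<Longrightarrow> s \<le> t \<Longrightarrow> K s \<le> KB"
    using continuous_attains_sup[of "{0..t}" K] t by fastforce
  have "norm (Y t)^2 \<le> 0"
  proof (rule DERIV_le_mult_imp_nonpos[OF _ _ _ t])
    show "((\<lambda>s. norm (Y s)^2) has_real_derivative
        4 * inner (Y s) (transpose (u s) ** lohe_field \<kappa> W (c s) (z s) (u s))) (at s within {0..})"
      if "0 \<le> s" for s
      unfolding Y_def by (rule has_real_derivative_norm_orthogonality_defect[OF ode[OF that]])
    show "4 * inner (Y s) (transpose (u s) ** lohe_field \<kappa> W (c s) (z s) (u s)) \<le> 4 * KB * norm (Y s)^2"
      if "0 \<le> s" "s \<le> t" for s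
    proof -
      have "inner (Y s) (transpose (u s) ** lohe_field \<kappa> W (c s) (z s) (u s)) \<le> K s * inner (Y s) (Y s)"
        unfolding Y_def K_def by (rule inner_orthogonality_defect_lohe_field_le[OF skew])
      also have "\<dots> \<le> KB * inner (Y s) (Y s)"
        using KB[OF that] by (rule mult_right_mono) simp
      finally show ?thesis
        by (simp add: power2_norm_eq_inner)
    qed
    show "norm (Y 0)^2 = 0"
      using init by (simp add: Y_def orthogonal_matrix)
  qed
  then show ?thesis
    by (simp add: Y_def orthogonal_matrix)
qed

lemma first_crossing:
  fixes g :: "'p::finite \<Rightarrow> real \<Rightarrow> real"
  assumes cont: "\<And>q. continuous_on {0..T} (g q)"
    and init: "\<And>q. g q 0 < 0"
    and cross: "0 \<le> t" "t \<le> T" "0 \<le> g p t"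
  obtains T0 p0 where "0 < T0" "T0 \<le> T" "g p0 T0 = 0" "\<And>q. g q T0 \<le> 0"
    "\<And>q s. 0 \<le> s \<Longrightarrow> s < T0 \<Longrightarrow> g q s < 0"
proof -
  define S where "S = (\<Union>q. {0..T} \<inter> g q -` {0..})"
  have "closed S"
    unfolding S_def using cont by (intro closed_UN ballI continuous_closed_preimage) auto
  moreover have "t \<in> S"
    using cross by (auto simp: S_def)
  moreover have "bdd_below S"
    by (auto simp: S_def intro: bdd_belowI[of _ 0])
  ultimately have "Inf S \<in> S"
    using closed_contains_Inf by blast
  then obtain p0 where p0: "0 \<le> g p0 (Inf S)" and range: "0 \<le> Inf S" "Inf S \<le> T"
    by (auto simp: S_def)
  have before: "g q s < 0" if "0 \<le> s" "s < Inf S" for q s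
  proof (rule ccontr)
    assume "\<not> g q s < 0"
    then have "s \<in> S"
      using that range by (auto simp: S_def not_less intro!: exI[of _ q])
    then have "Inf S \<le> s"
      using \<open>bdd_below S\<close> by (rule cInf_lower)
    then show False
      using that by simp
  qed
  have pos: "0 < Inf S"
  proof (rule ccontr)
    assume "\<not> 0 < Inf S"
    then have "Inf S = 0"
      using range by simp
    then show False
      using p0 init[of p0] by simp
  qed
  have at: "g q (Inf S) \<le> 0" for q
  proof (rule continuous_le_on_closure[where S="{0..<Inf S}" and f="g q" and x="Inf S"])
    have "closure {0..<Inf S} = {0..Inf S}"
      using pos by simp
    then show "continuous_on (closure {0..<Inf S}) (g q)"
      using range by (simp add: continuous_on_subset[OF cont])
    show "Inf S \<in> closure {0..<Inf S}"
      using pos by simp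
    show "g q s \<le> 0" if "s \<in> {0..<Inf S}" for s
      using before[of s q] that by simp
  qed
  show thesis
  proof (rule that)
    show "g p0 (Inf S) = 0"
      using p0 at[of p0] by simp
  qed (use pos range at before in simp_all)
qed

lemma barrier_comparison:
  fixes f f' :: "'p::finite \<Rightarrow> real \<Rightarrow> real" and \<phi> \<phi>' :: "real \<Rightarrow> real"
  assumes df: "\<And>p s. 0 \<le> s \<Longrightarrow> s \<le> T \<Longrightarrow> (f p has_real_derivative f' p s) (at s within {0..})"
    and d\<phi>: "\<And>s. 0 \<le> s \<Longrightarrow> s \<le> T \<Longrightarrow> (\<phi> has_real_derivative \<phi>' s) (at s within {0..})"
    and init: "\<And>p. f p 0 < \<phi> 0"
    and touch: "\<And>p s. 0 < s \<Longrightarrow> s \<le> T \<Longrightarrow> f p s = \<phi> s \<Longrightarrow> (\<And>q. f q s \<le> \<phi> s) \<Longrightarrow> f' p s < \<phi>' s"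
    and t: "0 \<le> t" "t \<le> T"
  shows "f p t < \<phi> t"
proof (rule ccontr)
  assume "\<not> f p t < \<phi> t"
  define g where "g q s = f q s - \<phi> s" for q s
  have dg: "(g q has_real_derivative f' q s - \<phi>' s) (at s within {0..})" if "0 \<le> s" "s \<le> T" for q s
    unfolding g_def using df[OF that] d\<phi>[OF that] by (rule DERIV_diff)
  have cont: "continuous_on {0..T} (g q)" for q
    by (rule DERIV_continuous_on, rule DERIV_subset[OF dg]) auto
  have g0: "g q 0 < 0" for q
    using init[of q] by (simp add: g_def)
  have "0 \<le> g p t"
    using \<open>\<not> f p t < \<phi> t\<close> by (simp add: g_def)
  then obtain T0 p0 where T0: "0 < T0" "T0 \<le> T" "g p0 T0 = 0" "\<And>q. g q T0 \<le> 0"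
    and before: "\<And>q s. 0 \<le> s \<Longrightarrow> s < T0 \<Longrightarrow> g q s < 0"
    by (rule first_crossing[of T g t p, OF cont g0 t]) blast
  have "f p0 T0 = \<phi> T0" "\<And>q. f q T0 \<le> \<phi> T0"
    using T0(3,4) by (simp_all add: g_def)
  then have "f' p0 T0 - \<phi>' T0 < 0"
    using touch[OF T0(1,2)] by simp
  then obtain d where "0 < d" and dec: "\<forall>h>0. T0 - h \<in> {0..} \<longrightarrow> h < d \<longrightarrow> g p0 T0 < g p0 (T0 - h)"
    using has_real_derivative_neg_dec_left[OF dg[of T0 p0]] T0(1,2) by auto
  define h where "h = min d T0 / 2"
  have "0 < h" "h < d" "0 \<le> T0 - h" "T0 - h < T0"
    using \<open>0 < d\<close> T0(1) by (auto simp: h_def)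
  then have "g p0 T0 < g p0 (T0 - h)" "g p0 (T0 - h) < 0"
    using dec before by simp_all
  then show False
    using T0(3) by simp
qed

lemma drift_lt_barrier_slope:
  fixes \<kappa> b w C :: real
  assumes \<kappa>: "0 < \<kappa>" and b: "0 < b" "b < w" "(64 * C / (7 * \<kappa>))^2 \<le> b"
  shows "2 * sqrt w * C - 7/16 * \<kappa> * w < - (7/32 * \<kappa>) * (w - b)"
proof -
  have w: "0 < w"
    using b(1,2) by (rule less_trans)
  have "\<bar>64 * C / (7 * \<kappa>)\<bar>^2 \<le> w"
    using b by (simp only: power2_abs)
  then have "\<bar>64 * C / (7 * \<kappa>)\<bar> \<le> sqrt w"
    by (rule real_le_rsqrt)
  then have "C \<le> 7/64 * \<kappa> * sqrt w"
    using \<kappa> by (simp add: abs_le_iff field_simps)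
  then have "2 * sqrt w * C \<le> 2 * sqrt w * (7/64 * \<kappa> * sqrt w)"
    using w by (intro mult_left_mono) simp_all
  also have "\<dots> = 7/32 * \<kappa> * (sqrt w * sqrt w)"
    by (simp add: algebra_simps)
  also have "\<dots> = 7/32 * (\<kappa> * w)"
    using w by simp
  finally have "0 \<le> 7/32 * (\<kappa> * w) - 2 * sqrt w * C"
    by simp
  moreover have "0 < 7/32 * (\<kappa> * b)"
    using \<kappa> b by simp
  moreover have "- (7/32 * \<kappa>) * (w - b) - (2 * sqrt w * C - 7/16 * \<kappa> * w)
      = 7/32 * (\<kappa> * b) + (7/32 * (\<kappa> * w) - 2 * sqrt w * C)"
    by (simp add: field_simps)
  ultimately show ?thesis
    by linarith
qed

lemma norm_diff_le_diam_F: "norm (X i - X j) \<le> diam_F (X::'k::finite \<Rightarrow> real^'n::finite^'n)"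
  unfolding diam_F_def frob_norm_eq_norm by (rule Max_ge) (auto intro!: image_eqI[where x="(i, j)"])

lemma diam_F_nonneg: "0 \<le> diam_F (X::'k::finite \<Rightarrow> real^'n::finite^'n)"
  using norm_diff_le_diam_F[of X undefined undefined] by simp

lemma sep_F_nonneg: "0 \<le> sep_F (X::'k::finite \<Rightarrow> real^'n::finite^'n)"
proof -
  have "\<bar>real CARD('n) - frob_inner (X undefined) (X undefined)\<bar> \<le> sep_F X"
    unfolding sep_F_def by (rule Max_ge) (auto intro!: image_eqI[where x="(undefined, undefined)"])
  then show ?thesis
    by (rule order_trans[OF abs_ge_zero])
qed

lemma lyapL_nonneg: "0 \<le> lyapL (X::'k::finite \<Rightarrow> real^'n::finite^'n) (Y::'k \<Rightarrow> real^'m::finite^'m)"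
  unfolding lyapL_def by (intro add_nonneg_nonneg diam_F_nonneg sep_F_nonneg)

lemma norm_diff_lt_of_lyapL_lt:
  fixes X :: "'k::finite \<Rightarrow> real^'n::finite^'n" and Y :: "'k \<Rightarrow> real^'m::finite^'m"
  assumes "lyapL X Y < r"
  shows "norm (X i - X j) < r" "norm (Y i - Y j) < r"
  using assms norm_diff_le_diam_F[of X i j] norm_diff_le_diam_F[of Y i j] diam_F_nonneg[of X]
    diam_F_nonneg[of Y] sep_F_nonneg[of X] sep_F_nonneg[of Y]
  unfolding lyapL_def by linarith+

lemma diam_F_sep_F_le:
  fixes X :: "'k::finite \<Rightarrow> real^'n::finite^'n"
  assumes orth: "\<And>j. orthogonal_matrix (X j)" and dist: "\<And>i j. norm (X i - X j)^2 \<le> B"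
  shows "diam_F X \<le> sqrt B" "sep_F X \<le> B / 2"
proof -
  show "diam_F X \<le> sqrt B"
    unfolding diam_F_def frob_norm_eq_norm by (rule Max.boundedI) (auto intro: real_le_rsqrt dist)
  have sep: "real CARD('n) - frob_inner (X i) (X j) = norm (X i - X j)^2 / 2" for i j
    using norm_diff_orthogonal_matrix_sq[OF orth orth, of i j] by (simp add: frob_inner_eq_inner)
  have "\<bar>real CARD('n) - frob_inner (X i) (X j)\<bar> = norm (X i - X j)^2 / 2" for i j
    unfolding sep by simp
  then show "sep_F X \<le> B / 2"
    unfolding sep_F_def by (intro Max.boundedI) (auto intro: divide_right_mono dist)
qed

lemma lyapL_le:
  fixes X :: "'k::finite \<Rightarrow> real^'n::finite^'n" and Y :: "'k \<Rightarrow> real^'m::finite^'m"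
  assumes "\<And>j. orthogonal_matrix (X j)" "\<And>j. orthogonal_matrix (Y j)"
    and "\<And>i j. norm (X i - X j)^2 \<le> B" "\<And>i j. norm (Y i - Y j)^2 \<le> B"
  shows "lyapL X Y \<le> 2 * sqrt B + B"
  using diam_F_sep_F_le[of X B] diam_F_sep_F_le[of Y B] assms unfolding lyapL_def by force

locale lohe_flow =
  fixes \<Omega> :: "'k::finite \<Rightarrow> real^'n::finite^'n" and \<Psi> :: "'k \<Rightarrow> real^'m::finite^'m"
    and \<kappa> :: real and U :: "'k \<Rightarrow> real \<Rightarrow> real^'n^'n" and V :: "'k \<Rightarrow> real \<Rightarrow> real^'m^'m"
  assumes skew_\<Omega>: "transpose (\<Omega> j) = - \<Omega> j" and skew_\<Psi>: "transpose (\<Psi> j) = - \<Psi> j"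
    and orthogonal_U0: "orthogonal_matrix (U j 0)" and orthogonal_V0: "orthogonal_matrix (V j 0)"
    and ode_U: "0 \<le> t \<Longrightarrow> (U j has_vector_derivative
      lohe_field \<kappa> (\<Omega> j) (\<lambda>k. inner (V j t) (V k t)) (\<lambda>k. U k t) (U j t)) (at t within {0..})"
    and ode_V: "0 \<le> t \<Longrightarrow> (V j has_vector_derivative
      lohe_field \<kappa> (\<Psi> j) (\<lambda>k. inner (U j t) (U k t)) (\<lambda>k. V k t) (V j t)) (at t within {0..})"

sublocale lohe_flow \<subseteq> swap: lohe_flow \<Psi> \<Omega> \<kappa> V U
  by unfold_locales (auto intro: skew_\<Psi> skew_\<Omega> orthogonal_V0 orthogonal_U0 ode_V ode_U)

context lohe_flow
begin

lemma has_real_derivative_dist_sq_U: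
  assumes "0 \<le> t"
  shows "((\<lambda>t. norm (U i t - U j t)^2) has_real_derivative
      2 * inner (U i t - U j t) (lohe_field \<kappa> (\<Omega> i) (\<lambda>k. inner (V i t) (V k t)) (\<lambda>k. U k t) (U i t)
                               - lohe_field \<kappa> (\<Omega> j) (\<lambda>k. inner (V j t) (V k t)) (\<lambda>k. U k t) (U j t)))
    (at t within {0..})"
  by (rule has_real_derivative_norm_sq[OF has_vector_derivative_diff[OF ode_U[OF assms] ode_U[OF assms]]])

lemma orthogonal_U:
  assumes "0 \<le> t"
  shows "orthogonal_matrix (U j t)"
proof (rule orthogonal_matrix_lohe_flow[where c="\<lambda>s k. inner (V j s) (V k s)" and z="\<lambda>s k. U k s",
      OF ode_U _ _ skew_\<Omega> orthogonal_U0 assms])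
  show "continuous_on {0..} (\<lambda>s. U k s)" for k
    using ode_U by (intro continuous_on_vector_derivative) auto
  show "continuous_on {0..} (\<lambda>s. inner (V j s) (V k s))" for k
    using ode_V by (intro continuous_on_inner continuous_on_vector_derivative) auto
qed

end

(* Each reopening of the context makes the lemmas proved so far available for the instance
   swap, that is for V. *)

context lohe_flow
begin

lemma deriv_dist_sq_U_le:
  assumes "0 \<le> t" "0 \<le> \<kappa>" "\<And>i j. norm (\<Omega> i - \<Omega> j) \<le> C" "w \<le> 1/4"
    and "\<And>i j. norm (U i t - U j t)^2 \<le> w" "\<And>i j. norm (V i t - V j t)^2 \<le> w"
    and "norm (U i t - U j t)^2 = w"
  shows "2 * inner (U i t - U j t) (lohe_field \<kappa> (\<Omega> i) (\<lambda>k. inner (V i t) (V k t)) (\<lambda>k. U k t) (U i t)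
                                   - lohe_field \<kappa> (\<Omega> j) (\<lambda>k. inner (V j t) (V k t)) (\<lambda>k. U k t) (U j t))
    \<le> 2 * sqrt w * C - 7/16 * \<kappa> * w"
  by (rule inner_diff_lohe_field_le[where u="\<lambda>k. U k t" and z="\<lambda>k. V k t"])
    (use assms orthogonal_U swap.orthogonal_U skew_\<Omega> in auto)

end

context lohe_flow
begin

lemma dist_sq_lt_barrier:
  assumes \<kappa>: "0 < \<kappa>"
    and C: "\<And>i j. norm (\<Omega> i - \<Omega> j) \<le> C" "\<And>i j. norm (\<Psi> i - \<Psi> j) \<le> C"
    and init: "\<And>i j. norm (U i 0 - U j 0)^2 < 1/4" "\<And>i j. norm (V i 0 - V j 0)^2 < 1/4"
    and b: "0 < b" "b < 1/4" "(64 * C / (7 * \<kappa>))^2 \<le> b" and t: "0 \<le> t"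
  shows "norm (U i t - U j t)^2 < b + (1/4 - b) * exp (- (7/32 * \<kappa>) * t)"
    and "norm (V i t - V j t)^2 < b + (1/4 - b) * exp (- (7/32 * \<kappa>) * t)"
proof -
  define l where "l = 7/32 * \<kappa>"
  define \<phi> where "\<phi> t = b + (1/4 - b) * exp (- l * t)" for t
  define dU where "dU i t = lohe_field \<kappa> (\<Omega> i) (\<lambda>k. inner (V i t) (V k t)) (\<lambda>k. U k t) (U i t)" for i t
  define dV where "dV i t = lohe_field \<kappa> (\<Psi> i) (\<lambda>k. inner (U i t) (U k t)) (\<lambda>k. V k t) (V i t)" for i t
  define F where "F p = (case p of Inl (i, j) \<Rightarrow> (\<lambda>t. norm (U i t - U j t)^2)
      | Inr (i, j) \<Rightarrow> (\<lambda>t. norm (V i t - V j t)^2))" for p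
  define F' where "F' p t = (case p of Inl (i, j) \<Rightarrow> 2 * inner (U i t - U j t) (dU i t - dU j t)
      | Inr (i, j) \<Rightarrow> 2 * inner (V i t - V j t) (dV i t - dV j t))" for p t
  have dF: "(F p has_real_derivative F' p s) (at s within {0..})" if "0 \<le> s" for p s
    using has_real_derivative_dist_sq_U[OF that] swap.has_real_derivative_dist_sq_U[OF that]
    by (cases p) (auto simp: F_def F'_def dU_def dV_def)
  have "F p t < \<phi> t" for p
  proof (rule barrier_comparison[where \<phi>'="\<lambda>s. - l * (\<phi> s - b)", OF dF _ _ _ t order_refl])
    show "(\<phi> has_real_derivative - l * (\<phi> s - b)) (at s within {0..})" for s
      unfolding \<phi>_def by (auto intro!: derivative_eq_intros)
    show "F p 0 < \<phi> 0" for p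
      using init by (cases p) (auto simp: F_def \<phi>_def)
    show "F' p s < - l * (\<phi> s - b)" if s: "0 < s" "F p s = \<phi> s" "\<And>q. F q s \<le> \<phi> s" for p s
    proof -
      have "exp (- l * s) \<le> 1"
        using \<kappa> s(1) by (simp add: l_def)
      then have "(1/4 - b) * exp (- l * s) \<le> 1/4 - b" "0 < (1/4 - b) * exp (- l * s)"
        using b mult_left_mono[of "exp (- l * s)" 1 "1/4 - b"] by simp_all
      then have w: "b < \<phi> s" "\<phi> s \<le> 1/4"
        by (simp_all add: \<phi>_def)
      have dist: "norm (U i s - U j s)^2 \<le> \<phi> s" "norm (V i s - V j s)^2 \<le> \<phi> s" for i j
        using s(3)[of "Inl (i, j)"] s(3)[of "Inr (i, j)"] by (simp_all add: F_def)
      have "F' p s \<le> 2 * sqrt (\<phi> s) * C - 7/16 * \<kappa> * \<phi> s"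
        using s(2) deriv_dist_sq_U_le[OF _ _ C(1) w(2) dist(1) dist(2)]
          swap.deriv_dist_sq_U_le[OF _ _ C(2) w(2) dist(2) dist(1)] s(1) \<kappa>
        by (cases p) (auto simp: F_def F'_def dU_def dV_def)
      also have "\<dots> < - l * (\<phi> s - b)"
        unfolding l_def using \<kappa> b(1) w(1) b(3) by (rule drift_lt_barrier_slope)
      finally show ?thesis .
    qed
  qed
  from this[of "Inl (i, j)"] this[of "Inr (i, j)"]
  show "norm (U i t - U j t)^2 < b + (1/4 - b) * exp (- (7/32 * \<kappa>) * t)"
    and "norm (V i t - V j t)^2 < b + (1/4 - b) * exp (- (7/32 * \<kappa>) * t)"
    by (simp_all add: F_def \<phi>_def l_def)
qed

lemma eventually_dist_sq_lt:
  assumes \<kappa>: "0 < \<kappa>"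
    and C: "\<And>i j. norm (\<Omega> i - \<Omega> j) \<le> C" "\<And>i j. norm (\<Psi> i - \<Psi> j) \<le> C"
    and init: "\<And>i j. norm (U i 0 - U j 0)^2 < 1/4" "\<And>i j. norm (V i 0 - V j 0)^2 < 1/4"
    and b: "0 < b" "b < 1/4" "(64 * C / (7 * \<kappa>))^2 \<le> b"
  shows "\<forall>\<^sub>F t in at_top. \<forall>i j. norm (U i t - U j t)^2 < 2 * b \<and> norm (V i t - V j t)^2 < 2 * b"
proof -
  have "filterlim (\<lambda>t. - (7/32 * \<kappa>) * t) at_bot at_top"
    using \<kappa> by (intro filterlim_tendsto_neg_mult_at_bot[OF tendsto_const _ filterlim_ident]) simp
  then have "((\<lambda>t. (1/4 - b) * exp (- (7/32 * \<kappa>) * t)) \<longlongrightarrow> 0) at_top"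
    by (intro tendsto_mult_right_zero filterlim_compose[OF exp_at_bot])
  then have "\<forall>\<^sub>F t in at_top. (1/4 - b) * exp (- (7/32 * \<kappa>) * t) < b"
    using b(1) by (rule order_tendstoD(2))
  then show ?thesis
    using eventually_ge_at_top[of 0]
  proof eventually_elim
    case (elim t)
    show ?case
    proof (intro allI conjI)
      fix i j
      show "norm (U i t - U j t)^2 < 2 * b" "norm (V i t - V j t)^2 < 2 * b"
        using dist_sq_lt_barrier[OF \<kappa> C init b elim(2), of i j] elim(1) by linarith+
    qed
  qed
qed

lemma Limsup_lyapL_le:
  assumes \<kappa>: "0 < \<kappa>" and L0: "lyapL (\<lambda>j. U j 0) (\<lambda>j. V j 0) < 1/2"
    and C: "\<And>i j. norm (\<Omega> i - \<Omega> j) \<le> C" "\<And>i j. norm (\<Psi> i - \<Psi> j) \<le> C"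
    and b: "0 < b" "b < 1/4" "(64 * C / (7 * \<kappa>))^2 \<le> b"
  shows "Limsup at_top (\<lambda>t. ereal (lyapL (\<lambda>j. U j t) (\<lambda>j. V j t))) \<le> ereal (2 * sqrt (2 * b) + 2 * b)"
proof -
  have sq: "x^2 < 1/4" if "0 \<le> x" "x < 1/2" for x :: real
    using power_strict_mono[OF that(2) that(1), of 2] by (simp add: power_divide)
  have "norm (U i 0 - U j 0)^2 < 1/4" "norm (V i 0 - V j 0)^2 < 1/4" for i j
    using sq[OF norm_ge_zero norm_diff_lt_of_lyapL_lt(1)[OF L0]]
      sq[OF norm_ge_zero norm_diff_lt_of_lyapL_lt(2)[OF L0]] by blast+
  then have "\<forall>\<^sub>F t in at_top. \<forall>i j. norm (U i t - U j t)^2 < 2 * b \<and> norm (V i t - V j t)^2 < 2 * b"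
    by (intro eventually_dist_sq_lt[OF \<kappa> C _ _ b])
  then have "\<forall>\<^sub>F t in at_top. lyapL (\<lambda>j. U j t) (\<lambda>j. V j t) \<le> 2 * sqrt (2 * b) + 2 * b"
    using eventually_ge_at_top[of 0]
    by eventually_elim (intro lyapL_le orthogonal_U swap.orthogonal_U; auto intro: less_imp_le)
  then show ?thesis
    by (intro Limsup_bounded) (simp add: eventually_mono)
qed

end

lemma mat_inf_norm_ge_row: "(\<Sum>j\<in>UNIV. \<bar>A$i$j\<bar>) \<le> mat_inf_norm (A::real^'n::finite^'m::finite)"
  unfolding mat_inf_norm_def by (rule Max_ge) auto

lemma norm_le_sqrt_card_mat_inf_norm:
  "norm (A::real^'n::finite^'m::finite) \<le> sqrt (real CARD('m)) * mat_inf_norm A"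
proof -
  have row: "norm (A$i) \<le> mat_inf_norm A" for i
    using norm_le_l1_cart[of "A$i"] mat_inf_norm_ge_row[of A i] by linarith
  have "norm A^2 = (\<Sum>i\<in>UNIV. norm (A$i)^2)"
    by (simp add: power2_norm_eq_inner inner_vec_def)
  also have "\<dots> \<le> (\<Sum>i\<in>(UNIV::'m set). mat_inf_norm A^2)"
    using row by (intro sum_mono power_mono) simp_all
  also have "\<dots> = real CARD('m) * mat_inf_norm A^2"
    by simp
  finally have "norm A \<le> sqrt (real CARD('m) * mat_inf_norm A^2)"
    by (rule real_le_rsqrt)
  also have "\<dots> = sqrt (real CARD('m)) * mat_inf_norm A"
    using order_trans[OF norm_ge_zero row] by (simp add: real_sqrt_mult)
  finally show ?thesis .
qed

lemma norm_diff_le_diam_inf: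
  "norm (W i - W j) \<le> sqrt (real CARD('n)) * diam_inf (W::'k::finite \<Rightarrow> real^'n::finite^'n)"
proof -
  have "mat_inf_norm (W i - W j) \<le> diam_inf W"
    unfolding diam_inf_def by (rule Max_ge) (auto intro!: image_eqI[where x="(i, j)"])
  then show ?thesis
    using norm_le_sqrt_card_mat_inf_norm[of "W i - W j"] by (meson mult_left_mono order_trans real_sqrt_ge_zero of_nat_0_le_iff)
qed

lemma diam_inf_nonneg: "0 \<le> diam_inf (W::'k::finite \<Rightarrow> real^'n::finite^'n)"
  using norm_diff_le_diam_inf[of W undefined undefined] by (simp add: zero_le_mult_iff)

lemma norm_diff_le_diam_inf_of_le:
  fixes \<Omega> :: "'k::finite \<Rightarrow> real^'n::finite^'n" and \<Psi> :: "'k \<Rightarrow> real^'m::finite^'m"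
  assumes "CARD('m) \<le> CARD('n)" "diam_inf \<Psi> \<le> diam_inf \<Omega>"
  shows "norm (\<Psi> i - \<Psi> j) \<le> sqrt (real CARD('n)) * diam_inf \<Omega>"
proof -
  have "sqrt (real CARD('m)) * diam_inf \<Psi> \<le> sqrt (real CARD('n)) * diam_inf \<Omega>"
    using assms diam_inf_nonneg[of \<Psi>] by (intro mult_mono) simp_all
  then show ?thesis
    using norm_diff_le_diam_inf[of \<Psi> i j] by linarith
qed

lemma continuous_on_gfun: "continuous_on S (gfun n m)"
  unfolding gfun_def by (intro continuous_intros)

text \<open>\<open>s_star n m\<close> is the positive critical point of \<open>gfun n m\<close>, i.e. the positive root of
  \<open>(6n + 8) s\<^sup>2 + 2 (4n + 9) s = 2m\<close>.\<close>

lemma s_star_gfun_pos: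
  fixes n m :: real
  assumes n: "0 \<le> n" and m: "0 < m"
  shows "0 < s_star n m" "0 < gfun n m (s_star n m)"
proof -
  define A where "A = 4 * n + 9"
  define B where "B = 6 * n + 8"
  define R where "R = sqrt ((4 * n + 9)^2 + 4 * m * (3 * n + 4))"
  have A: "0 < A" and B: "0 < B"
    using n by (simp_all add: A_def B_def)
  have "R^2 = A^2 + 2 * m * B"
    unfolding R_def A_def B_def using n m by (simp add: algebra_simps)
  then have "A^2 < R^2"
    using m B by simp
  then have "A < R"
    by (rule power_less_imp_less_base) (use n m in \<open>simp add: R_def\<close>)
  define s where "s = s_star n m"
  have "B * s = R - A"
    using B by (simp add: s_def s_star_def R_def A_def B_def)
  then have "0 < B * s"
    using \<open>A < R\<close> by simp
  then have "0 < s"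
    using B by (simp add: zero_less_mult_iff)
  have "B * (B * s^2 + 2 * A * s) = (B * s)^2 + 2 * A * (B * s)"
    by (simp add: algebra_simps power2_eq_square)
  also have "\<dots> = R^2 - A^2"
    unfolding \<open>B * s = R - A\<close> by (simp add: algebra_simps power2_eq_square)
  also have "\<dots> = B * (2 * m)"
    using \<open>R^2 = A^2 + 2 * m * B\<close> by simp
  finally have critical: "B * s^2 + 2 * A * s = 2 * m"
    using B by simp
  have "gfun n m s = s * (2 * m - A * s - B / 3 * s^2)"
    by (simp add: gfun_def A_def B_def algebra_simps power2_eq_square power3_eq_cube)
  also have "2 * m - A * s - B / 3 * s^2 = A * s + 2/3 * B * s^2"
    unfolding critical[symmetric] by (simp add: field_simps)
  finally have "gfun n m s = s * (A * s + 2/3 * B * s^2)" .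
  moreover have "0 < s * (A * s + 2/3 * B * s^2)"
    using \<open>0 < s\<close> A B by (intro mult_pos_pos add_pos_pos) simp_all
  ultimately show "0 < s_star n m" "0 < gfun n m (s_star n m)"
    using \<open>0 < s\<close> by (simp_all add: s_def)
qed

lemma gfun_neg:
  fixes n m s :: real
  assumes n: "0 \<le> n" and mn: "m \<le> n" and s: "1/2 \<le> s"
  shows "gfun n m s < 0"
proof -
  have "(4 * n + 9) * (1/2) \<le> (4 * n + 9) * s"
    using n s by (intro mult_left_mono) simp_all
  then have "2 * m - (4 * n + 9) * s < 0"
    using mn by argo
  then have "s * (2 * m - (4 * n + 9) * s) < 0"
    using s by (intro mult_pos_neg) simp_all
  moreover have "0 \<le> (2 * n + 8/3) * s^3"
    using n s by simp
  moreover have "gfun n m s = s * (2 * m - (4 * n + 9) * s) - (2 * n + 8/3) * s^3"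
    by (simp add: gfun_def algebra_simps power2_eq_square power3_eq_cube)
  ultimately show ?thesis
    by linarith
qed

lemma GreatestI_closed:
  fixes P :: "real \<Rightarrow> bool"
  assumes "P a" "closed {x. a \<le> x \<and> P x}" "\<And>x. P x \<Longrightarrow> x \<le> b"
  shows "P (GREATEST x. P x)"
proof -
  define S where "S = {x. a \<le> x \<and> P x}"
  have "bdd_above S"
    using assms(3) by (intro bdd_aboveI[where M=b]) (simp add: S_def)
  then have "Sup S \<in> S"
    using assms(1,2) by (intro closed_contains_Sup) (auto simp: S_def)
  moreover have "x \<le> Sup S" if "P x" for x
  proof (cases "a \<le> x")
    case True
    then show ?thesis
      using that \<open>bdd_above S\<close> by (intro cSup_upper) (simp_all add: S_def)
  next
    case False
    then show ?thesis
      using \<open>Sup S \<in> S\<close> by (simp add: S_def)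
  qed
  ultimately show ?thesis
    using GreatestI2_order[of P "Sup S" P] by (simp add: S_def)
qed

lemma kappa_pos_nu2_lt_half:
  fixes n m DO \<kappa> :: real
  assumes n: "0 \<le> n" and m: "0 < m" "m \<le> n" and DO: "0 \<le> DO" and \<kappa>: "kappa_c n m DO < \<kappa>"
  shows "0 < \<kappa>" "nu2 n m DO \<kappa> < 1/2"
proof -
  define c where "c = 2 * (1 + 3 * sqrt n) * DO"
  define y where "y = c / \<kappa>"
  have c: "0 \<le> c"
    using n DO by (simp add: c_def)
  note s_star = s_star_gfun_pos[OF n m(1)]
  have "0 \<le> kappa_c n m DO"
    using c s_star by (simp add: kappa_c_def c_def)
  then show "0 < \<kappa>"
    using \<kappa> by linarith
  have "c < \<kappa> * gfun n m (s_star n m)"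
    using \<kappa> s_star by (simp add: kappa_c_def c_def divide_less_eq mult.commute)
  then have y: "0 \<le> y" "y < gfun n m (s_star n m)"
    using c \<open>0 < \<kappa>\<close> by (simp_all add: y_def divide_less_eq mult.commute)
  have small: "s < 1/2" if "gfun n m s = y" for s
    using gfun_neg[OF n m(2), of s] that y(1) by fastforce
  have "s_star n m < 1/2"
    using gfun_neg[OF n m(2), of "s_star n m"] s_star(2) by fastforce
  then obtain s0 where s0: "s_star n m \<le> s0" "gfun n m s0 = y"
    using IVT2'[of "gfun n m" "1/2" y "s_star n m"] gfun_neg[OF n m(2), of "1/2"] y continuous_on_gfun
    by fastforce
  have closed: "closed {x. s0 \<le> x \<and> 0 < x \<and> gfun n m x = y}"
  proof -
    have "{x. s0 \<le> x \<and> 0 < x \<and> gfun n m x = y} = {s0..} \<inter> gfun n m -` {y}"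
      using s0 s_star by auto
    then show ?thesis
      by (simp add: continuous_closed_preimage continuous_on_gfun)
  qed
  have "0 < nu2 n m DO \<kappa> \<and> gfun n m (nu2 n m DO \<kappa>) = y"
    unfolding nu2_def c_def[symmetric] y_def[symmetric]
    by (rule GreatestI_closed[where b="1/2", OF _ closed]) (use s0 s_star small in \<open>auto intro: less_imp_le\<close>)
  then show "nu2 n m DO \<kappa> < 1/2"
    using small by blast
qed

lemma tendsto_zero_ereal_sandwich:
  fixes f :: "'a \<Rightarrow> ereal" and g :: "'a \<Rightarrow> real"
  assumes "\<And>x. 0 \<le> f x" and "\<forall>\<^sub>F x in F. f x \<le> ereal (g x)" and "(g \<longlongrightarrow> 0) F"
  shows "(f \<longlongrightarrow> 0) F"
proof (rule tendsto_sandwich[where f="\<lambda>_. 0" and h="\<lambda>x. ereal (g x)"])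
  show "((\<lambda>x. ereal (g x)) \<longlongrightarrow> 0) F"
    using tendsto_ereal[OF assms(3)] by (simp add: zero_ereal_def)
qed (simp_all add: assms)

theorem propositionC1:
  fixes \<Omega> :: "'k::finite \<Rightarrow> real^'n::finite^'n"
    and \<Psi> :: "'k \<Rightarrow> real^'m::finite^'m"
    and U0 :: "'k \<Rightarrow> real^'n^'n" and V0 :: "'k \<Rightarrow> real^'m^'m"
    and U :: "real \<Rightarrow> 'k \<Rightarrow> real \<Rightarrow> real^'n^'n"
    and V :: "real \<Rightarrow> 'k \<Rightarrow> real \<Rightarrow> real^'m^'m"
  defines "Adm \<equiv> {\<kappa>. \<kappa> > kappa_c (real CARD('n)) (real CARD('m)) (diam_inf \<Omega>)
                    \<and> lyapL U0 V0 < nu2 (real CARD('n)) (real CARD('m)) (diam_inf \<Omega>) \<kappa>}"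
  assumes nm: "CARD('m) \<le> CARD('n)"
    and skewO: "\<And>j. transpose (\<Omega> j) = - \<Omega> j"
    and skewP: "\<And>j. transpose (\<Psi> j) = - \<Psi> j"
    and diam: "diam_inf \<Psi> \<le> diam_inf \<Omega>"
    and init_SO: "\<And>j. rotation_matrix (U0 j) \<and> rotation_matrix (V0 j)"
    and init: "\<And>\<kappa> j. \<kappa> \<in> Adm \<Longrightarrow> U \<kappa> j 0 = U0 j \<and> V \<kappa> j 0 = V0 j"
    and odeU: "\<And>\<kappa> j t. \<kappa> \<in> Adm \<Longrightarrow> t \<ge> 0 \<Longrightarrow>
       (U \<kappa> j has_vector_derivative
          (\<Omega> j ** U \<kappa> j t + (\<kappa> / real CARD('k)) *\<^sub>R
             (\<Sum>k\<in>UNIV. frob_inner (V \<kappa> j t) (V \<kappa> k t) *\<^sub>R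
                 (U \<kappa> k t - U \<kappa> j t ** transpose (U \<kappa> k t) ** U \<kappa> j t))))
       (at t within {0..})"
    and odeV: "\<And>\<kappa> j t. \<kappa> \<in> Adm \<Longrightarrow> t \<ge> 0 \<Longrightarrow>
       (V \<kappa> j has_vector_derivative
          (\<Psi> j ** V \<kappa> j t + (\<kappa> / real CARD('k)) *\<^sub>R
             (\<Sum>k\<in>UNIV. frob_inner (U \<kappa> j t) (U \<kappa> k t) *\<^sub>R
                 (V \<kappa> k t - V \<kappa> j t ** transpose (V \<kappa> k t) ** V \<kappa> j t))))
       (at t within {0..})"
  shows "((\<lambda>\<kappa>. Limsup at_top (\<lambda>t. ereal (lyapL (\<lambda>j. U \<kappa> j t) (\<lambda>j. V \<kappa> j t))))
            \<longlongrightarrow> 0) (inf at_top (principal Adm))"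
proof -
  define n m DO where "n = real CARD('n)" and "m = real CARD('m)" and "DO = diam_inf \<Omega>"
  define C where "C = sqrt n * DO"
  \<comment> \<open>the summand \<open>inverse \<kappa>\<close> keeps \<open>b \<kappa>\<close> positive when \<open>C = 0\<close>\<close>
  define b where "b \<kappa> = (64 * C / 7 * inverse \<kappa>)^2 + inverse \<kappa>" for \<kappa> :: real
  define LS where "LS \<kappa> = Limsup at_top (\<lambda>t. ereal (lyapL (\<lambda>j. U \<kappa> j t) (\<lambda>j. V \<kappa> j t)))" for \<kappa>
  have C_\<Omega>: "norm (\<Omega> i - \<Omega> j) \<le> C" and C_\<Psi>: "norm (\<Psi> i - \<Psi> j) \<le> C" for i j
    unfolding C_def n_def DO_def using nm diam
    by (simp_all add: norm_diff_le_diam_inf norm_diff_le_diam_inf_of_le)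
  have LS_le: "LS \<kappa> \<le> ereal (2 * sqrt (2 * b \<kappa>) + 2 * b \<kappa>)" if \<kappa>: "\<kappa> \<in> Adm" and "b \<kappa> < 1/4" for \<kappa>
  proof -
    have "kappa_c n m DO < \<kappa>" "lyapL U0 V0 < nu2 n m DO \<kappa>"
      using \<kappa> by (simp_all add: Adm_def n_def m_def DO_def)
    moreover have "0 \<le> n" "0 < m" "m \<le> n" "0 \<le> DO"
      using nm by (simp_all add: n_def m_def DO_def diam_inf_nonneg)
    ultimately have "0 < \<kappa>" "lyapL U0 V0 < 1/2"
      using kappa_pos_nu2_lt_half[of n m DO \<kappa>] by auto
    interpret lohe_flow \<Omega> \<Psi> \<kappa> "U \<kappa>" "V \<kappa>"
      by unfold_locales (simp_all add: skewO skewP init[OF \<kappa>] init_SO[unfolded rotation_matrix_def]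
          lohe_field_def odeU[OF \<kappa>, unfolded frob_inner_eq_inner] odeV[OF \<kappa>, unfolded frob_inner_eq_inner])
    show ?thesis
      unfolding LS_def
    proof (rule Limsup_lyapL_le[OF \<open>0 < \<kappa>\<close> _ C_\<Omega> C_\<Psi> _ \<open>b \<kappa> < 1/4\<close>])
      show "lyapL (\<lambda>j. U \<kappa> j 0) (\<lambda>j. V \<kappa> j 0) < 1/2"
        using \<open>lyapL U0 V0 < 1/2\<close> init[OF \<kappa>] by simp
      show "0 < b \<kappa>"
        using \<open>0 < \<kappa>\<close> unfolding b_def by (intro add_nonneg_pos) simp_all
      have "64 * C / (7 * \<kappa>) = 64 * C / 7 * inverse \<kappa>"
        by (simp add: field_simps)
      then show "(64 * C / (7 * \<kappa>))^2 \<le> b \<kappa>"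
        using \<open>0 < \<kappa>\<close> by (simp only: b_def) simp
    qed
  qed
  have "((\<lambda>\<kappa>. (64 * C / 7 * inverse \<kappa>)^2 + inverse \<kappa>) \<longlongrightarrow> (64 * C / 7 * 0)^2 + 0) at_top"
    by (intro tendsto_intros tendsto_inverse_0_at_top filterlim_ident)
  then have b_lim: "(b \<longlongrightarrow> 0) at_top"
    by (simp add: b_def[abs_def])
  have "(LS \<longlongrightarrow> 0) (inf at_top (principal Adm))"
  proof (rule tendsto_zero_ereal_sandwich)
    show "0 \<le> LS \<kappa>" for \<kappa>
      unfolding LS_def by (rule le_Limsup) (simp_all add: lyapL_nonneg)
    have "\<forall>\<^sub>F \<kappa> in at_top. b \<kappa> < 1/4"
      using b_lim by (rule order_tendstoD) simp
    then show "\<forall>\<^sub>F \<kappa> in inf at_top (principal Adm). LS \<kappa> \<le> ereal (2 * sqrt (2 * b \<kappa>) + 2 * b \<kappa>)"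
      unfolding eventually_inf_principal by (rule eventually_mono) (simp add: LS_le)
    have "((\<lambda>\<kappa>. 2 * sqrt (2 * b \<kappa>) + 2 * b \<kappa>) \<longlongrightarrow> 2 * sqrt (2 * 0) + 2 * 0) at_top"
      using b_lim by (intro tendsto_intros)
    then show "((\<lambda>\<kappa>. 2 * sqrt (2 * b \<kappa>) + 2 * b \<kappa>) \<longlongrightarrow> 0) (inf at_top (principal Adm))"
      by (simp add: tendsto_mono[OF inf_le1])
  qed
  then show ?thesis
    unfolding LS_def .
qed

end
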